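(* Let $\lambda>0$ and $0<\theta<\pi/2$. For every $n\ge0$, $\mathcal C_{\pi/2-\theta}(V_n)\cap H_n=\emptyset$.
   Context: $\mathcal P_\lambda$: homogeneous Poisson point process of intensity $\lambda$ on $\mathbb R^2$ under its Palm distribution (point added at origin $o$). Polar coordinates $(r_v,\varphi_v)$, $\varphi_v\in[-\pi,\pi)$ from $e_1$; for $\alpha\in(0,\pi/2)$, $\mathcal C_\alpha=\{v:r_v>0,|\varphi_v|\le\alpha\}$, $\mathcal C_\alpha(v)=v+\mathcal C_\alpha$. Navigation: $V_0=o$, $V_{i+1}=\arg\min\{|v-V_i|:v\in\mathcal P_\lambda\cap\mathcal C_\theta(V_i)\}$, $U_i=V_i-V_{i-1}$. History sets: $H_0=\emptyset$, $H_1=\mathcal C_\theta(U_1)\cap B(o,|U_1|)$, $H_n=\mathcal C_\theta(V_{n-1}+U_n)\cap(H_{n-1}\cup B(V_{n-1},|U_n|))$ for $n\ge2$, where $B(x,r)$ is the open ball of radius $r$ about $x$. *)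

theory Defs
  imports "HOL-Analysis.Analysis"
begin

text \<open>The plane R^2 is modelled by the complex numbers; the polar angle of v is Arg v
  (values in (-pi,pi]; the paper uses [-pi,pi), which makes no difference for |angle| < pi/2).\<close>

definition cone :: "real \<Rightarrow> complex set" where
  "cone \<alpha> = {v. v \<noteq> 0 \<and> \<bar>Arg v\<bar> \<le> \<alpha>}"

definition cone_at :: "real \<Rightarrow> complex \<Rightarrow> complex set" where
  "cone_at \<alpha> x = {v. v - x \<in> cone \<alpha>}"

definition locally_finite :: "complex set \<Rightarrow> bool" where
  "locally_finite P \<longleftrightarrow> (\<forall>B. bounded B \<longrightarrow> finite (P \<inter> B))"

definition nav_path :: "complex set \<Rightarrow> real \<Rightarrow> (nat \<Rightarrow> complex) \<Rightarrow> bool" where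
  "nav_path P \<theta> V \<longleftrightarrow> V 0 = 0 \<and>
     (\<forall>i. V (Suc i) \<in> P \<inter> cone_at \<theta> (V i) \<and>
          (\<forall>v \<in> P \<inter> cone_at \<theta> (V i). cmod (V (Suc i) - V i) \<le> cmod (v - V i)))"

definition incr :: "(nat \<Rightarrow> complex) \<Rightarrow> nat \<Rightarrow> complex" where
  "incr V i = V i - V (i - 1)"

fun hist :: "real \<Rightarrow> (nat \<Rightarrow> complex) \<Rightarrow> nat \<Rightarrow> complex set" where
  "hist \<theta> V 0 = {}"
| "hist \<theta> V (Suc 0) = cone_at \<theta> (incr V 1) \<inter> ball 0 (cmod (incr V 1))"
| "hist \<theta> V (Suc (Suc n)) =
     cone_at \<theta> (V (Suc n) + incr V (Suc (Suc n))) \<inter>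
       (hist \<theta> V (Suc n) \<union> ball (V (Suc n)) (cmod (incr V (Suc (Suc n)))))"

end

theory Submission
  imports Defs
begin

text \<open>Each step of the navigation path lies in the cone of half-angle \<open>\<theta>\<close>, and this convex cone
  is closed under addition, so \<open>V n - V k \<in> cone \<theta>\<close> whenever \<open>k < n\<close>.  A point \<open>x\<close> in the cone of
  half-angle \<open>pi/2 - \<theta>\<close> at \<open>V n\<close> then makes a non-acute angle with \<open>V n - V k\<close> at \<open>V n\<close>, hence
  \<open>dist x (V k) \<ge> dist (V n) (V k) \<ge> dist (V (k+1)) (V k)\<close>, the latter because \<open>V n\<close> was a
  candidate when \<open>V (k+1)\<close> was chosen.  So \<open>x\<close> misses every ball \<open>B(V k, |U (k+1)|)\<close>, \<open>k < n\<close>,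
  and \<open>H n\<close> is contained in the union of these balls.\<close>

lemma cmod_mult_cos_Arg: "cmod z * cos (Arg z) = Re z"
  and cmod_mult_sin_Arg: "cmod z * sin (Arg z) = Im z"
  by (metis Re_rcis rcis_cmod_Arg) (metis Im_rcis rcis_cmod_Arg)

lemma inner_complex_polar: "a \<bullet> b = cmod a * cmod b * cos (Arg a - Arg b)"
  by (simp add: inner_complex_def cos_diff algebra_simps
      flip: cmod_mult_cos_Arg[of a] cmod_mult_cos_Arg[of b] cmod_mult_sin_Arg[of a] cmod_mult_sin_Arg[of b])

lemma mem_cone_iff_cos:
  assumes "0 \<le> \<alpha>" "\<alpha> \<le> pi"
  shows "v \<in> cone \<alpha> \<longleftrightarrow> v \<noteq> 0 \<and> cos \<alpha> * cmod v \<le> Re v"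
proof (cases "v = 0")
  case True
  then show ?thesis by (simp add: cone_def)
next
  case False
  have "0 \<le> \<bar>Arg v\<bar>" "\<bar>Arg v\<bar> \<le> pi"
    using Arg_bounded[of v] by auto
  then have "\<bar>Arg v\<bar> \<le> \<alpha> \<longleftrightarrow> cos \<alpha> \<le> cos \<bar>Arg v\<bar>"
    by (rule cos_mono_le_eq[OF assms, symmetric])
  also have "\<dots> \<longleftrightarrow> cos \<alpha> * cmod v \<le> Re v"
    using False by (simp flip: cmod_mult_cos_Arg add: mult.commute)
  finally show ?thesis
    using False by (simp add: cone_def)
qed

lemma cone_add:
  assumes "0 \<le> \<alpha>" "\<alpha> < pi / 2" "a \<in> cone \<alpha>" "b \<in> cone \<alpha>"
  shows "a + b \<in> cone \<alpha>"
proof -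
  have \<alpha>: "0 \<le> \<alpha>" "\<alpha> \<le> pi"
    using assms(1,2) by auto
  have cos_pos: "cos \<alpha> > 0"
    using assms(1,2) by (intro cos_gt_zero_pi) auto
  have a: "a \<noteq> 0" "cos \<alpha> * cmod a \<le> Re a" and b: "cos \<alpha> * cmod b \<le> Re b"
    using assms(3,4) by (auto simp: mem_cone_iff_cos[OF \<alpha>])
  have "cos \<alpha> * cmod (a + b) \<le> cos \<alpha> * (cmod a + cmod b)"
    using cos_pos norm_triangle_ineq[of a b] by simp
  also have "\<dots> \<le> Re (a + b)"
    using a b by (simp add: distrib_left)
  finally have "cos \<alpha> * cmod (a + b) \<le> Re (a + b)" .
  moreover have "a + b \<noteq> 0"
  proof -
    have "0 < cos \<alpha> * cmod a" "0 \<le> cos \<alpha> * cmod b"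
      using cos_pos a by simp_all
    then have "Re (a + b) > 0"
      using a b by simp
    then show ?thesis
      by (metis less_irrefl zero_complex.sel(1))
  qed
  ultimately show ?thesis
    by (auto simp: mem_cone_iff_cos[OF \<alpha>])
qed

lemma inner_nonneg_cone_cone:
  assumes "\<alpha> + \<beta> \<le> pi / 2" "a \<in> cone \<alpha>" "b \<in> cone \<beta>"
  shows "0 \<le> a \<bullet> b"
proof -
  have "\<bar>Arg a\<bar> \<le> \<alpha>" "\<bar>Arg b\<bar> \<le> \<beta>"
    using assms(2,3) by (auto simp: cone_def)
  then have "cos (Arg a - Arg b) \<ge> 0"
    using assms(1) by (intro cos_ge_zero) auto
  then show ?thesis
    by (simp add: inner_complex_polar)
qed

lemma norm_le_norm_add_if_inner_nonneg:
  fixes a b :: "'a::real_inner"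
  assumes "0 \<le> a \<bullet> b"
  shows "norm a \<le> norm (a + b)"
proof -
  have "(norm (a + b))\<^sup>2 = (norm a)\<^sup>2 + 2 * (a \<bullet> b) + (norm b)\<^sup>2"
    by (simp add: power2_norm_eq_inner inner_add_left inner_add_right inner_commute)
  then have "(norm a)\<^sup>2 \<le> (norm (a + b))\<^sup>2"
    using assms by simp
  then show ?thesis
    by (rule power2_le_imp_le) simp
qed

lemma nav_path_step_in_cone:
  "nav_path P \<theta> V \<Longrightarrow> V (Suc i) - V i \<in> cone \<theta>"
  by (simp add: nav_path_def cone_at_def)

lemma nav_path_in_points:
  "nav_path P \<theta> V \<Longrightarrow> V (Suc i) \<in> P"
  by (simp add: nav_path_def)

lemma nav_path_nearest:
  "nav_path P \<theta> V \<Longrightarrow> v \<in> P \<Longrightarrow> v - V i \<in> cone \<theta> \<Longrightarrow>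
    dist (V (Suc i)) (V i) \<le> dist v (V i)"
  by (simp add: nav_path_def cone_at_def dist_norm)

lemma nav_path_diff_in_cone:
  assumes "0 \<le> \<theta>" "\<theta> < pi / 2" "nav_path P \<theta> V" "k < n"
  shows "V n - V k \<in> cone \<theta>"
  using \<open>k < n\<close>
proof (induction n)
  case 0
  then show ?case by simp
next
  case (Suc n)
  show ?case
  proof (cases "k = n")
    case True
    then show ?thesis
      using nav_path_step_in_cone[OF assms(3)] by simp
  next
    case False
    then have "V n - V k \<in> cone \<theta>"
      using Suc by simp
    from cone_add[OF assms(1,2) this nav_path_step_in_cone[OF assms(3), of n]]
    show ?thesis by simp
  qed
qed

lemma hist_subset_balls:
  "V 0 = 0 \<Longrightarrow> hist \<theta> V n \<subseteq> (\<Union>k<n. ball (V k) (dist (V (Suc k)) (V k)))"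
proof (induction \<theta> V n rule: hist.induct)
  case (1 \<theta> V)
  then show ?case by simp
next
  case (2 \<theta> V)
  then show ?case
    by (auto simp: incr_def dist_norm norm_minus_commute)
next
  case (3 \<theta> V n)
  have "hist \<theta> V (Suc (Suc n)) \<subseteq>
      hist \<theta> V (Suc n) \<union> ball (V (Suc n)) (dist (V (Suc (Suc n))) (V (Suc n)))"
    by (auto simp: incr_def dist_norm)
  with 3 show ?case
    by (auto simp: lessThan_Suc)
qed

lemma nav_path_ball_disjoint_cone_at:
  assumes "0 \<le> \<theta>" "\<theta> < pi / 2" "nav_path P \<theta> V" "k < n"
  shows "ball (V k) (dist (V (Suc k)) (V k)) \<inter> cone_at (pi / 2 - \<theta>) (V n) = {}"
proof (intro equals0I)
  fix x
  assume x: "x \<in> ball (V k) (dist (V (Suc k)) (V k)) \<inter> cone_at (pi / 2 - \<theta>) (V n)"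
  have step: "V n - V k \<in> cone \<theta>"
    using nav_path_diff_in_cone[OF assms] .
  have "V n \<in> P"
    using nav_path_in_points[OF assms(3), of "n - 1"] \<open>k < n\<close> by simp
  then have nearest: "dist (V (Suc k)) (V k) \<le> dist (V n) (V k)"
    using nav_path_nearest[OF assms(3) _ step] by blast
  have "x - V n \<in> cone (pi / 2 - \<theta>)"
    using x by (simp add: cone_at_def)
  then have "0 \<le> (V n - V k) \<bullet> (x - V n)"
    by (intro inner_nonneg_cone_cone[OF _ step]) auto
  then have "dist (V n) (V k) \<le> dist x (V k)"
    using norm_le_norm_add_if_inner_nonneg by (fastforce simp: dist_norm)
  with nearest x show False
    by (simp add: dist_commute)
qed

theorem lemma4p4:
  fixes \<theta> :: real and P :: "complex set" and V :: "nat \<Rightarrow> complex"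
  assumes "0 < \<theta>" and "\<theta> < pi / 2"
    and "0 \<in> P" and "locally_finite P"
    and "nav_path P \<theta> V"
  shows "\<forall>n. cone_at (pi / 2 - \<theta>) (V n) \<inter> hist \<theta> V n = {}"
proof
  fix n
  have "hist \<theta> V n \<subseteq> (\<Union>k<n. ball (V k) (dist (V (Suc k)) (V k)))"
    using assms(5) by (intro hist_subset_balls) (simp add: nav_path_def)
  moreover have "ball (V k) (dist (V (Suc k)) (V k)) \<inter> cone_at (pi / 2 - \<theta>) (V n) = {}"
    if "k < n" for k
    using assms(1,2,5) that by (intro nav_path_ball_disjoint_cone_at) auto
  ultimately show "cone_at (pi / 2 - \<theta>) (V n) \<inter> hist \<theta> V n = {}"
    by blast
qed

end
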